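(* Let $a,b\in\mathbb{Q}_3$ with $\gamma(a)=\gamma(b)=0$ and $a_0=1$. Then $x=\sum_{k\ge0}x_k3^k\in\mathbb{Z}_3^*$ is a solution of $x^3+ax=b$ if and only if the congruences $$x_0^3+a_0x_0\equiv b_0 \pmod 3,$$ $$x_1a_0+x_0a_1+N_1(x_0)+M_1(x_0)\equiv b_1\pmod 3,$$ $$x_ka_0+x_{k-1}a_1+\dots+x_0a_k+x_0^2x_{k-1}+N_k(x_0,\dots,x_{k-1})+M_k(x_0,\dots,x_{k-1})\equiv b_k\pmod 3,\quad k\ge2,$$ are fulfilled, where the integers $M_k(x_0,\dots,x_{k-1})$ are defined successively by $$x_0^3+a_0x_0=b_0+3M_1(x_0),$$ $$x_1a_0+x_0a_1+N_1(x_0)=b_1-M_1(x_0)+3M_2(x_0,x_1),$$ $$x_{k-1}a_0+x_{k-2}a_1+\dots+x_0a_{k-1}+x_0^2x_{k-2}+N_{k-1}(x_0,\dots,x_{k-2})=b_{k-1}-M_{k-1}(x_0,\dots,x_{k-2})+3M_k(x_0,\dots,x_{k-1}),\quad k\ge3.$$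
   Context: Every nonzero $3$-adic number has a unique canonical form; write $a=3^{\gamma(a)}(a_0+a_13+a_23^2+\dots)$, $b=3^{\gamma(b)}(b_0+b_13+b_23^2+\dots)$ with digits $a_j,b_j\in\{0,1,2\}$, $a_0,b_0\ne0$, and $\gamma(a),\gamma(b)\in\mathbb{Z}$ the valuations. $\mathbb{Z}_3^*$ is the set of $3$-adic units; an element $x\in\mathbb{Z}_3^*$ is written $x=x_0+x_13+x_23^2+\dots$ with $x_j\in\{0,1,2\}$, $x_0\neq0$. For $k\ge1$, $$N_k(x_0,\dots,x_{k-1})=\sum \frac{3!}{m_0!m_1!\cdots m_{k-1}!}x_0^{m_0}x_1^{m_1}\cdots x_{k-1}^{m_{k-1}},$$ the sum over nonnegative integers $m_0,\dots,m_{k-1}$ with $\sum_{i=0}^{k-1}m_i=3$ and $\sum_{i=1}^{k-1}im_i=k$; in particular $N_1=0$. (These satisfy $(\sum_i x_i3^i)^3=x_0^3+\sum_{k\ge1}(3x_0^2x_k+N_k)3^k$.) *)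

theory Defs
  imports "HOL-Number_Theory.Cong"
begin

text \<open>A 3-adic number of valuation 0 (resp. a 3-adic unit) is represented by its canonical
digit sequence d :: nat => int with d j in {0,1,2} and d 0 \<noteq> 0.\<close>

definition digits3 :: "(nat \<Rightarrow> int) \<Rightarrow> bool" where
  "digits3 d \<longleftrightarrow> (\<forall>j. d j \<in> {0,1,2})"

definition unit_digits3 :: "(nat \<Rightarrow> int) \<Rightarrow> bool" where
  "unit_digits3 d \<longleftrightarrow> digits3 d \<and> d 0 \<noteq> 0"

text \<open>Truncation d_0 + d_1 3 + ... + d_{n-1} 3^{n-1}: the image in Z/3^n Z.\<close>
definition trunc3 :: "(nat \<Rightarrow> int) \<Rightarrow> nat \<Rightarrow> int" where
  "trunc3 d n = (\<Sum>i<n. d i * 3 ^ i)"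

text \<open>x^3 + a x = b holds in Z_3 = lim Z/3^n Z, i.e. modulo 3^n for every n.\<close>
definition cubic_solution3 :: "(nat \<Rightarrow> int) \<Rightarrow> (nat \<Rightarrow> int) \<Rightarrow> (nat \<Rightarrow> int) \<Rightarrow> bool" where
  "cubic_solution3 a b x \<longleftrightarrow>
     (\<forall>n. [trunc3 x n ^ 3 + trunc3 a n * trunc3 x n = trunc3 b n] (mod 3 ^ n))"

definition Nset :: "nat \<Rightarrow> (nat \<Rightarrow> nat) set" where
  "Nset k = {m. (\<forall>i\<ge>k. m i = 0) \<and> (\<Sum>i<k. m i) = 3 \<and> (\<Sum>i<k. i * m i) = k}"

definition Ncoef :: "nat \<Rightarrow> (nat \<Rightarrow> int) \<Rightarrow> int" where
  "Ncoef k x = (\<Sum>m\<in>Nset k.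
      (fact 3 div (\<Prod>i<k. fact (m i))) * (\<Prod>i<k. x i ^ m i))"

definition Lterm :: "(nat \<Rightarrow> int) \<Rightarrow> (nat \<Rightarrow> int) \<Rightarrow> nat \<Rightarrow> int" where
  "Lterm a x k = (\<Sum>i\<le>k. x (k - i) * a i)
       + (if k \<ge> 2 then x 0 ^ 2 * x (k - 1) else 0) + Ncoef k x"

text \<open>The integers M_k, defined successively (k \<ge> 1):
  x_0^3 + a_0 x_0 = b_0 + 3 M_1,
  Lterm_{k} + M_k = b_k + 3 M_{k+1}.
 The divisions are exact whenever the preceding congruences hold.\<close>
fun Mseq :: "(nat \<Rightarrow> int) \<Rightarrow> (nat \<Rightarrow> int) \<Rightarrow> (nat \<Rightarrow> int) \<Rightarrow> nat \<Rightarrow> int" where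
  "Mseq a b x 0 = 0"
| "Mseq a b x (Suc 0) = (x 0 ^ 3 + a 0 * x 0 - b 0) div 3"
| "Mseq a b x (Suc (Suc k)) =
     (Lterm a x (Suc k) + Mseq a b x (Suc k) - b (Suc k)) div 3"

end

theory Submission
  imports Defs "HOL-Combinatorics.Multiset_Permutations"
begin

text \<open>Expanding \<open>x\<^sup>3 + a x\<close> as a Cauchy product, the coefficient of \<open>3\<^sup>k\<close> (\<open>k \<ge> 1\<close>) is
  \<open>x\<^sub>k a\<^sub>0 + \<dots> + x\<^sub>0 a\<^sub>k + N\<^sub>k + 3 x\<^sub>0\<^sup>2 x\<^sub>k\<close> by the multinomial theorem. Moving the multiple of 3
  one place up gives the coefficients \<open>c\<^sub>k\<close> on the left of the congruences, so modulo every
  \<open>3\<^sup>n\<close> the left side of the equation agrees with \<open>\<Sum> c\<^sub>k 3\<^sup>k\<close>. That series equals \<open>b\<close> in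
  \<open>\<int>\<^sub>3\<close> exactly when long addition with the carries \<open>M\<^sub>k\<close> produces the digits of \<open>b\<close>, i.e.
  when \<open>c\<^sub>k + M\<^sub>k \<equiv> b\<^sub>k (mod 3)\<close> for all \<open>k\<close>. No hypothesis on the digits is needed.\<close>

definition cauchy_prod :: "(nat \<Rightarrow> int) \<Rightarrow> (nat \<Rightarrow> int) \<Rightarrow> nat \<Rightarrow> int" where
  "cauchy_prod f g k = (\<Sum>i\<le>k. f i * g (k - i))"

lemma trunc3_0 [simp]: "trunc3 f 0 = 0"
  by (simp add: trunc3_def)

lemma trunc3_Suc: "trunc3 f (Suc n) = trunc3 f n + f n * 3 ^ n"
  by (simp add: trunc3_def)

lemma trunc3_mult_cong: "[trunc3 f n * trunc3 g n = trunc3 (cauchy_prod f g) n] (mod 3 ^ n)"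
proof -
  let ?h = "\<lambda>i j. f i * g j * 3 ^ (i + j)"
  let ?A = "{..<n} \<times> {..<n}"
  let ?P = "{(i,j). i + j < n}"
  have "trunc3 f n * trunc3 g n = (\<Sum>(i,j)\<in>?A. ?h i j)"
    unfolding trunc3_def sum_product sum.cartesian_product by (simp add: power_add mult_ac)
  also have "\<dots> = (\<Sum>(i,j)\<in>?A - ?P. ?h i j) + (\<Sum>(i,j)\<in>?P. ?h i j)"
    by (rule sum.subset_diff) auto
  also have "(\<Sum>(i,j)\<in>?P. ?h i j) = trunc3 (cauchy_prod f g) n"
    unfolding sum.triangle_reindex trunc3_def cauchy_prod_def sum_distrib_right
    by (intro sum.cong refl) auto
  finally have split: "trunc3 f n * trunc3 g n - trunc3 (cauchy_prod f g) n
      = (\<Sum>(i,j)\<in>?A - ?P. ?h i j)" by simp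
  have "(3::int) ^ n dvd (\<Sum>(i,j)\<in>?A - ?P. ?h i j)"
  proof (rule dvd_sum)
    fix p assume "p \<in> ?A - ?P"
    then obtain i j where p: "p = (i,j)" "n \<le> i + j" by auto
    then have "(3::int) ^ n dvd 3 ^ (i + j)" by (intro le_imp_power_dvd)
    then show "(3::int) ^ n dvd (case p of (i,j) \<Rightarrow> ?h i j)" using p by simp
  qed
  then show ?thesis unfolding cong_iff_dvd_diff split .
qed

lemma sum_mset_eq_sum_count:
  fixes f :: "'a \<Rightarrow> 'b::comm_semiring_1"
  assumes "finite A" "set_mset M \<subseteq> A"
  shows "(\<Sum>x\<in>#M. f x) = (\<Sum>i\<in>A. of_nat (count M i) * f i)"
  using assms(2)
proof (induction M)
  case (add a M)
  have "(\<Sum>i\<in>A. of_nat (count (add_mset a M) i) * f i)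
      = (\<Sum>i\<in>A. of_nat (count M i) * f i + (if i = a then f a else 0))"
    by (intro sum.cong) (auto simp: algebra_simps)
  then show ?case using add assms(1) by (simp add: sum.distrib add.commute)
qed simp

lemma prod_mset_eq_prod_count:
  fixes f :: "'a \<Rightarrow> 'b::comm_monoid_mult"
  assumes "finite A" "set_mset M \<subseteq> A"
  shows "(\<Prod>x\<in>#M. f x) = (\<Prod>i\<in>A. f i ^ count M i)"
  unfolding image_prod_mset_multiplicity
  by (rule prod.mono_neutral_left) (use assms in \<open>auto simp: not_in_iff\<close>)

lemma sum_prod_list_by_mset:
  fixes f :: "'a \<Rightarrow> 'b::comm_semiring_1"
  assumes "finite L" and perm_closed: "\<And>xs ys. xs \<in> L \<Longrightarrow> mset ys = mset xs \<Longrightarrow> ys \<in> L"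
  shows "(\<Sum>xs\<in>L. prod_list (map f xs)) =
     (\<Sum>M\<in>mset ` L. of_nat (card (permutations_of_multiset M)) * (\<Prod>x\<in>#M. f x))"
proof -
  have "(\<Sum>xs\<in>L. prod_list (map f xs))
      = (\<Sum>M\<in>mset ` L. \<Sum>xs\<in>{xs \<in> L. mset xs = M}. prod_list (map f xs))"
    by (rule sum.image_gen[OF \<open>finite L\<close>])
  also have "\<dots> = (\<Sum>M\<in>mset ` L. of_nat (card (permutations_of_multiset M)) * (\<Prod>x\<in>#M. f x))"
  proof (rule sum.cong[OF refl])
    fix M assume "M \<in> mset ` L"
    then have "{xs \<in> L. mset xs = M} = permutations_of_multiset M"
      using perm_closed by (auto simp: permutations_of_multiset_def)
    moreover have "prod_list (map f xs) = (\<Prod>x\<in>#M. f x)" if "xs \<in> permutations_of_multiset M" for xs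
      using that by (simp add: permutations_of_multiset_def flip: prod_mset_prod_list)
    ultimately show "(\<Sum>xs\<in>{xs \<in> L. mset xs = M}. prod_list (map f xs))
        = of_nat (card (permutations_of_multiset M)) * (\<Prod>x\<in>#M. f x)"
      by simp
  qed
  finally show ?thesis .
qed

text \<open>The index tuples of \<open>N\<^sub>k\<close>, as ordered triples; \<open>Nset k\<close> records their multiplicities.\<close>

definition proper_triples :: "nat \<Rightarrow> nat list set" where
  "proper_triples k = {xs. length xs = 3 \<and> sum_list xs = k \<and> set xs \<subseteq> {..<k}}"

lemma finite_proper_triples: "finite (proper_triples k)"
  by (rule finite_subset[OF _ finite_lists_length_eq[OF finite_lessThan, of k 3]])
     (auto simp: proper_triples_def)

lemma mset_proper_triples:
  "mset ` proper_triples k = {M. size M = 3 \<and> sum_mset M = k \<and> set_mset M \<subseteq> {..<k}}"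
proof (intro equalityI subsetI)
  fix M assume M: "M \<in> {M. size M = 3 \<and> sum_mset M = k \<and> set_mset M \<subseteq> {..<k}}"
  obtain xs where xs: "mset xs = M" using ex_mset by blast
  with M have "xs \<in> proper_triples k"
    by (auto simp: proper_triples_def simp flip: sum_mset_sum_list)
  with xs show "M \<in> mset ` proper_triples k" by blast
qed (auto simp: proper_triples_def sum_mset_sum_list)

lemma count_in_Nset:
  assumes "size M = 3" "sum_mset M = k" "set_mset M \<subseteq> {..<k}"
  shows "count M \<in> Nset k"
proof -
  have "size M = (\<Sum>i<k. count M i)"
    using sum_mset_eq_sum_count[OF finite_lessThan assms(3), of "\<lambda>_. 1::nat"]
    by simp
  moreover have "sum_mset M = (\<Sum>i<k. i * count M i)"
    using sum_mset_eq_sum_count[OF finite_lessThan assms(3), of "\<lambda>i. i"] by (simp add: mult.commute)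
  moreover have "\<forall>i\<ge>k. count M i = 0" using assms(3) by (auto simp: not_in_iff[symmetric])
  ultimately show ?thesis using assms by (simp add: Nset_def)
qed

lemma Ncoef_eq_sum_proper_triples: "Ncoef k x = (\<Sum>xs\<in>proper_triples k. prod_list (map x xs))"
proof -
  let ?MS = "{M. size M = 3 \<and> sum_mset M = k \<and> set_mset M \<subseteq> {..<k}}"
  have "(\<Sum>xs\<in>proper_triples k. prod_list (map x xs)) =
     (\<Sum>M\<in>?MS. of_nat (card (permutations_of_multiset M)) * (\<Prod>i\<in>#M. x i))"
    unfolding mset_proper_triples[symmetric]
    by (rule sum_prod_list_by_mset[OF finite_proper_triples])
       (auto simp: proper_triples_def simp flip: sum_mset_sum_list dest: mset_eq_setD mset_eq_length)
  also have "\<dots> = Ncoef k x"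
    unfolding Ncoef_def
  proof (rule sym, rule sum.reindex_bij_witness[where i=count and j=Abs_multiset])
    fix m assume m: "m \<in> Nset k"
    have "finite {i. 0 < m i}"
      by (rule finite_subset[of _ "{..<k}"]) (use m in \<open>auto simp: Nset_def not_less[symmetric]\<close>)
    then show cnt: "count (Abs_multiset m) = m" by (rule count_Abs_multiset)
    let ?M = "Abs_multiset m"
    have set_M: "set_mset ?M = {i. 0 < m i}" using cnt by (simp add: set_mset_def)
    have sub: "set_mset ?M \<subseteq> {..<k}"
      using m by (auto simp: set_M Nset_def not_less[symmetric])
    have "size ?M = (\<Sum>i<k. m i)"
      using sum_mset_eq_sum_count[OF finite_lessThan sub, of "\<lambda>_. 1::nat"]
      by (simp add: cnt)
    moreover have "sum_mset ?M = (\<Sum>i<k. i * m i)"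
      using sum_mset_eq_sum_count[OF finite_lessThan sub, of "\<lambda>i. i"] by (simp add: cnt mult.commute)
    ultimately have size_M: "size ?M = 3" and "sum_mset ?M = k" using m by (auto simp: Nset_def)
    with sub show "?M \<in> ?MS" by simp
    have "(\<Prod>i<k. fact (m i) :: int) = int (\<Prod>i\<in>set_mset ?M. fact (count ?M i))"
      unfolding set_M cnt of_nat_prod of_nat_fact
      by (rule prod.mono_neutral_right) (use sub set_M in auto)
    moreover have "(\<Prod>i<k. x i ^ m i) = (\<Prod>i\<in>#?M. x i)"
      using prod_mset_eq_prod_count[OF finite_lessThan sub, of x] cnt by simp
    ultimately show "int (card (permutations_of_multiset ?M)) * (\<Prod>i\<in>#?M. x i)
       = fact 3 div (\<Prod>i<k. fact (m i)) * (\<Prod>i<k. x i ^ m i)"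
      unfolding card_permutations_of_multiset(1) zdiv_int size_M by simp
  next
    fix M assume "M \<in> ?MS"
    then show "count M \<in> Nset k" by (intro count_in_Nset) auto
  qed (simp add: count_inverse)
  finally show ?thesis by simp
qed

lemma cauchy_cube_eq_sum_triples:
  "cauchy_prod (cauchy_prod x x) x k
     = (\<Sum>xs\<in>{xs. length xs = 3 \<and> sum_list xs = k}. prod_list (map x xs))"
proof -
  have "cauchy_prod (cauchy_prod x x) x k
      = (\<Sum>(s,i)\<in>Sigma {..k} (\<lambda>s. {..s}). x i * x (s - i) * x (k - s))"
    unfolding cauchy_prod_def sum_distrib_right by (rule sum.Sigma) auto
  also have "\<dots> = (\<Sum>xs\<in>{xs. length xs = 3 \<and> sum_list xs = k}. prod_list (map x xs))"
    by (rule sum.reindex_bij_witness[where i="\<lambda>xs. (xs!0 + xs!1, xs!0)"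
                                        and j="\<lambda>(s,i). [i, s - i, k - s]"])
       (auto simp: numeral_3_eq_3 length_Suc_conv)
  finally show ?thesis .
qed

lemma cauchy_cube_coeff:
  assumes "k \<ge> 1"
  shows "cauchy_prod (cauchy_prod x x) x k = Ncoef k x + 3 * x 0 ^ 2 * x k"
proof -
  let ?T = "{[k,0,0],[0,k,0],[0,0,k]}"
  have triples: "{xs. length xs = 3 \<and> sum_list xs = k} = proper_triples k \<union> ?T"
  proof (intro equalityI subsetI)
    fix xs assume "xs \<in> {xs. length xs = 3 \<and> sum_list xs = k}"
    then obtain p q r where "xs = [p,q,r]" "p + q + r = k"
      by (auto simp: numeral_3_eq_3 length_Suc_conv)
    then show "xs \<in> proper_triples k \<union> ?T"
      by (cases "p < k \<and> q < k \<and> r < k") (auto simp: proper_triples_def)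
  qed (auto simp: proper_triples_def)
  have "proper_triples k \<inter> ?T = {}" by (auto simp: proper_triples_def)
  then have "cauchy_prod (cauchy_prod x x) x k
      = (\<Sum>xs\<in>proper_triples k. prod_list (map x xs)) + (\<Sum>xs\<in>?T. prod_list (map x xs))"
    unfolding cauchy_cube_eq_sum_triples triples
    by (intro sum.union_disjoint finite_proper_triples) simp_all
  also have "(\<Sum>xs\<in>?T. prod_list (map x xs)) = 3 * x 0 ^ 2 * x k"
    using assms by (simp add: power2_eq_square)
  finally show ?thesis by (simp add: Ncoef_eq_sum_proper_triples)
qed

definition cubic_lhs :: "(nat \<Rightarrow> int) \<Rightarrow> (nat \<Rightarrow> int) \<Rightarrow> nat \<Rightarrow> int" where
  "cubic_lhs a x k = (if k = 0 then x 0 ^ 3 + a 0 * x 0 else Lterm a x k)"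

lemma cauchy_cubic_minus_cubic_lhs:
  "cauchy_prod (cauchy_prod x x) x k + cauchy_prod a x k - cubic_lhs a x k =
     (if k = 0 then 0 else 3 * x 0 ^ 2 * x k - (if k \<ge> 2 then x 0 ^ 2 * x (k - 1) else 0))"
proof (cases "k = 0")
  case True
  then show ?thesis by (simp add: cubic_lhs_def cauchy_prod_def power3_eq_cube)
next
  case False
  have "cauchy_prod a x k = (\<Sum>i\<le>k. x (k - i) * a i)" by (simp add: cauchy_prod_def mult.commute)
  with False cauchy_cube_coeff[of k x] show ?thesis by (simp add: cubic_lhs_def Lterm_def)
qed

text \<open>The defects \<open>3 x\<^sub>0\<^sup>2 x\<^sub>k 3\<^sup>k\<close> and \<open>x\<^sub>0\<^sup>2 x\<^sub>k 3\<^sup>k\<^sup>+\<^sup>1\<close> of consecutive positions cancel, so only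
  the last carried term survives in the truncation.\<close>

lemma trunc3_cubic_minus_cubic_lhs:
  "trunc3 (cauchy_prod (cauchy_prod x x) x) n + trunc3 (cauchy_prod a x) n - trunc3 (cubic_lhs a x) n
     = (if n \<ge> 2 then x 0 ^ 2 * x (n - 1) * 3 ^ n else 0)"
proof (induction n)
  case (Suc n)
  have "trunc3 (cauchy_prod (cauchy_prod x x) x) (Suc n) + trunc3 (cauchy_prod a x) (Suc n)
        - trunc3 (cubic_lhs a x) (Suc n)
     = (trunc3 (cauchy_prod (cauchy_prod x x) x) n + trunc3 (cauchy_prod a x) n - trunc3 (cubic_lhs a x) n)
       + (cauchy_prod (cauchy_prod x x) x n + cauchy_prod a x n - cubic_lhs a x n) * 3 ^ n"
    unfolding trunc3_Suc by (simp add: algebra_simps)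
  also have "\<dots> = (if Suc n \<ge> 2 then x 0 ^ 2 * x n * 3 ^ Suc n else 0)"
    unfolding Suc.IH cauchy_cubic_minus_cubic_lhs
    by (cases "n = 0"; cases "n = 1") (auto simp: algebra_simps)
  finally show ?case by simp
qed simp

lemma trunc3_cubic_cong:
  "[trunc3 x n ^ 3 + trunc3 a n * trunc3 x n = trunc3 (cubic_lhs a x) n] (mod 3 ^ n)"
proof -
  have "[trunc3 x n * trunc3 x n * trunc3 x n = trunc3 (cauchy_prod x x) n * trunc3 x n] (mod 3 ^ n)"
    by (intro cong_mult trunc3_mult_cong cong_refl)
  also have "[trunc3 (cauchy_prod x x) n * trunc3 x n = trunc3 (cauchy_prod (cauchy_prod x x) x) n] (mod 3 ^ n)"
    by (rule trunc3_mult_cong)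
  finally have "[trunc3 x n ^ 3 + trunc3 a n * trunc3 x n
      = trunc3 (cauchy_prod (cauchy_prod x x) x) n + trunc3 (cauchy_prod a x) n] (mod 3 ^ n)"
    by (intro cong_add trunc3_mult_cong) (simp add: power3_eq_cube)
  also have "[trunc3 (cauchy_prod (cauchy_prod x x) x) n + trunc3 (cauchy_prod a x) n
      = trunc3 (cubic_lhs a x) n] (mod 3 ^ n)"
    unfolding cong_iff_dvd_diff trunc3_cubic_minus_cubic_lhs by simp
  finally show ?thesis .
qed

text \<open>Long addition in base 3: \<open>M\<close> is the carry sequence of \<open>c\<close> against \<open>b\<close>.\<close>

lemma trunc3_diff_eq_carry:
  assumes M0: "M 0 = 0" and MSuc: "\<And>k. M (Suc k) = (c k + M k - b k) div 3"
    and digits: "\<forall>j<n. [c j + M j = b j] (mod 3)"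
  shows "trunc3 c n - trunc3 b n = 3 ^ n * M n"
  using digits
proof (induction n)
  case (Suc n)
  have "(3::int) dvd c n + M n - b n" using Suc.prems by (simp add: cong_iff_dvd_diff)
  then have "c n + M n - b n = 3 * M (Suc n)" by (simp add: MSuc)
  moreover have "trunc3 c (Suc n) - trunc3 b (Suc n) = 3 ^ n * (c n + M n - b n)"
    using Suc by (simp add: trunc3_Suc algebra_simps)
  ultimately show ?case by simp
qed (simp add: M0)

lemma trunc3_cong_iff_carry_digits:
  assumes M0: "M 0 = 0" and MSuc: "\<And>k. M (Suc k) = (c k + M k - b k) div 3"
  shows "(\<forall>n. [trunc3 c n = trunc3 b n] (mod 3 ^ n)) \<longleftrightarrow> (\<forall>k. [c k + M k = b k] (mod 3))"
proof
  assume trunc_cong: "\<forall>n. [trunc3 c n = trunc3 b n] (mod 3 ^ n)"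
  have "[c k + M k = b k] (mod 3)" for k
  proof (induction k rule: less_induct)
    case (less k)
    then have "trunc3 c k - trunc3 b k = 3 ^ k * M k"
      by (intro trunc3_diff_eq_carry[OF M0 MSuc]) blast
    then have "trunc3 c (Suc k) - trunc3 b (Suc k) = 3 ^ k * (c k + M k - b k)"
      by (simp add: trunc3_Suc algebra_simps)
    moreover have "(3::int) ^ Suc k dvd trunc3 c (Suc k) - trunc3 b (Suc k)"
      using trunc_cong[rule_format, of "Suc k"] by (simp only: cong_iff_dvd_diff)
    ultimately have "(3::int) ^ k * 3 dvd 3 ^ k * (c k + M k - b k)" by (simp add: mult.commute)
    then show ?case by (simp add: cong_iff_dvd_diff)
  qed
  then show "\<forall>k. [c k + M k = b k] (mod 3)" ..
next
  assume "\<forall>k. [c k + M k = b k] (mod 3)"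
  then show "\<forall>n. [trunc3 c n = trunc3 b n] (mod 3 ^ n)"
    using trunc3_diff_eq_carry[OF M0 MSuc] by (simp add: cong_iff_dvd_diff)
qed

lemma Mseq_Suc: "Mseq a b x (Suc k) = (cubic_lhs a x k + Mseq a b x k - b k) div 3"
  by (cases k) (simp_all add: cubic_lhs_def)

lemma split_all_nat_ge1: "(\<forall>k::nat. P k) \<longleftrightarrow> P 0 \<and> (\<forall>k\<ge>1. P k)"
  by (metis leI less_one)

theorem theorem3p1:
  fixes a b x :: "nat \<Rightarrow> int"
  assumes ha: "unit_digits3 a" and hb: "unit_digits3 b"
    and ha0: "a 0 = 1"
    and hx: "unit_digits3 x"
  shows "cubic_solution3 a b x \<longleftrightarrow>
    ([x 0 ^ 3 + a 0 * x 0 = b 0] (mod 3) \<and>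
     (\<forall>k\<ge>1. [Lterm a x k + Mseq a b x k = b k] (mod 3)))"
proof -
  have "cubic_solution3 a b x \<longleftrightarrow> (\<forall>n. [trunc3 (cubic_lhs a x) n = trunc3 b n] (mod 3 ^ n))"
    unfolding cubic_solution3_def
    by (intro iff_allI) (meson trunc3_cubic_cong cong_sym cong_trans)
  also have "\<dots> \<longleftrightarrow> (\<forall>k. [cubic_lhs a x k + Mseq a b x k = b k] (mod 3))"
    by (rule trunc3_cong_iff_carry_digits) (simp_all add: Mseq_Suc)
  also have "\<dots> \<longleftrightarrow> [x 0 ^ 3 + a 0 * x 0 = b 0] (mod 3) \<and>
      (\<forall>k\<ge>1. [Lterm a x k + Mseq a b x k = b k] (mod 3))"
    using split_all_nat_ge1[where P="\<lambda>k. [cubic_lhs a x k + Mseq a b x k = b k] (mod 3)"]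
    by (simp add: cubic_lhs_def)
  finally show ?thesis .
qed

end
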